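(* Let $t_0\in\mathbb{R}$, $\nu>0$, $D\ge0$, $\delta\ge0$, $S_0\ge0$, $R_0\ge0$, $I_0\ge0$. Let $\tau:[t_0,+\infty)\to[0,+\infty)$ be continuous with $|\tau(t)|\le\tau_{\max}$ for some $\tau_{\max}>0$. Let $\beta:[0,+\infty)\to[0,1]$ be measurable and continuous, with $\beta(a)=0$ for all $a\ge a_+$ for some $a_+>0$, and set $\Gamma(a)=e^{-(\nu+D)a}\beta(a)$ for $a\ge0$. Let $p:[0,+\infty)\to[0,+\infty)$ be integrable with $\int_0^{+\infty}p=1$ and, for $\kappa>0$, let $$\Lambda_\kappa(t)=e^{-(\nu+D)(t-t_0)}\int_0^{+\infty}\beta(a+(t-t_0))\,I_0\kappa p(\kappa a)\,da,\qquad t\ge t_0.$$ For a continuous function $x$ on $[t_0,+\infty)$ define $$F(x)(t)=S_0-\int_{t_0}^{t}\Big[x(m)-\delta R_x(m)\Big]dm,$$ $$R_x(m)=e^{-\delta(m-t_0)}R_0+\nu\int_{t_0}^{m}e^{-\delta(m-s)}\Big[e^{-(\nu+D)(s-t_0)}I_0+\int_0^{s-t_0}e^{-(\nu+D)a}x(s-a)\,da\Big]ds.$$ Assume that for every $\kappa$ there is a continuous function $N_\kappa$ on $[t_0,+\infty)$ with $|N_\kappa(t)|\le 2\tau_{\max}S_0I_0$ for all $t$ satisfying $$N_\kappa(t)=\tau(t)\,F(N_\kappa)(t)\Big[\Lambda_\kappa(t)+\int_0^{t-t_0}\beta(a)e^{-(\nu+D)a}N_\kappa(t-a)\,da\Big],\qquad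 t\ge t_0.$$ Then $N(t)=\lim_{\kappa\to\infty}N_\kappa(t)$ exists, the limit being uniform in $t$ on every closed and bounded subinterval of $[t_0,+\infty)$, and $t\mapsto N(t)$ is the unique continuous solution of the Volterra integral equation $$N(t)=\tau(t)\,F(N)(t)\Big[I_0\,\Gamma(t-t_0)+\int_0^{t-t_0}\Gamma(a)N(t-a)\,da\Big],\qquad t\ge t_0.$$
   Context: This concerns the infection-age-structured SIRS (Kermack–McKendrick type) model $S'=-\tau S\int_0^\infty\beta(a)i(t,a)da+\delta R$, $\partial_t i+\partial_a i=-(\nu+D)i$, $R'=\nu\int_0^\infty i\,da-\delta R$, $i(t,0)=\tau S\int_0^\infty\beta i\,da$, where $N(t)$ is the flow of newly infected individuals, $F(N)(t)$ is the number of susceptibles $S(t)$, $\delta$ the rate of loss of immunity, and the initial distribution of infected individuals is approximated by $I_0\kappa p(\kappa a)$, which tends as $\kappa\to\infty$ to a single cohort $I_0\delta_0$ (all $I_0$ infected at infection age $0$ at time $t_0$). *)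

theory Defs
  imports "HOL-Analysis.Analysis"
begin

text \<open>Integrals are Henstock--Kurzweil integrals ('integral'); on [t0,t] the
integrands are continuous, so this coincides with the Lebesgue integral.\<close>

definition Gamma_fn :: "real \<Rightarrow> real \<Rightarrow> (real \<Rightarrow> real) \<Rightarrow> real \<Rightarrow> real" where
  "Gamma_fn \<nu> D \<beta> a = exp (-(\<nu> + D) * a) * \<beta> a"

definition Lambda_fn :: "real \<Rightarrow> real \<Rightarrow> real \<Rightarrow> real \<Rightarrow> (real \<Rightarrow> real) \<Rightarrow> (real \<Rightarrow> real)
    \<Rightarrow> real \<Rightarrow> real \<Rightarrow> real" where
  "Lambda_fn t0 \<nu> D I0 \<beta> p \<kappa> t =
     exp (-(\<nu> + D) * (t - t0)) *
     integral {0..} (\<lambda>a. \<beta> (a + (t - t0)) * (I0 * \<kappa> * p (\<kappa> * a)))"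

definition R_fn :: "real \<Rightarrow> real \<Rightarrow> real \<Rightarrow> real \<Rightarrow> real \<Rightarrow> real \<Rightarrow> (real \<Rightarrow> real)
    \<Rightarrow> real \<Rightarrow> real" where
  "R_fn t0 \<nu> D \<delta> R0 I0 x m =
     exp (-\<delta> * (m - t0)) * R0 +
     \<nu> * integral {t0..m} (\<lambda>s. exp (-\<delta> * (m - s)) *
        (exp (-(\<nu> + D) * (s - t0)) * I0 +
         integral {0..s - t0} (\<lambda>a. exp (-(\<nu> + D) * a) * x (s - a))))"

definition F_op :: "real \<Rightarrow> real \<Rightarrow> real \<Rightarrow> real \<Rightarrow> real \<Rightarrow> real \<Rightarrow> real \<Rightarrow> (real \<Rightarrow> real)
    \<Rightarrow> real \<Rightarrow> real" where
  "F_op t0 \<nu> D \<delta> S0 R0 I0 x t =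
     S0 - integral {t0..t} (\<lambda>m. x m - \<delta> * R_fn t0 \<nu> D \<delta> R0 I0 x m)"

end

theory Submission
  imports Defs
begin

text \<open>For a fixed initial term \<open>L\<close>, the right-hand side \<open>x \<mapsto> \<tau> F(x) (L + \<Gamma> * x)\<close> of the
  renewal equation is Lipschitz on bounded sets for the weighted norm
  \<open>sup {exp (-l (t - t0)) |x t| | t \<in> [t0, T]}\<close>, with a constant of order \<open>1 / l\<close>,
  because both \<open>F\<close> and the convolution integrate once in time.  Taking \<open>l\<close> large turns this into a
  stability estimate: bounded solutions for initial terms \<open>L1\<close> and \<open>L2\<close> differ on \<open>[t0, T]\<close> by at
  most a constant times \<open>sup |L1 - L2|\<close>.  After the substitution \<open>b = \<kappa> a\<close>, \<open>\<Lambda>\<^sub>\<kappa>(t)\<close> is an average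
  of \<open>\<beta>(b / \<kappa> + t - t0)\<close> against the fixed density \<open>p\<close>, so \<open>\<Lambda>\<^sub>\<kappa> \<rightarrow> I0 \<Gamma>(\<cdot> - t0)\<close> uniformly, \<open>\<beta>\<close>
  being uniformly continuous.  Hence the \<open>N\<^sub>\<kappa>\<close> are uniformly Cauchy on compact intervals; their limit
  solves the limiting equation by the same estimate, and uniqueness is the stability estimate
  with \<open>L1 = L2\<close>.\<close>

section \<open>Integrals with exponential weights\<close>

lemma continuous_on_atLeast_if_continuous_on_Icc:
  fixes f :: "real \<Rightarrow> real"
  assumes "\<And>T. t0 \<le> T \<Longrightarrow> continuous_on {t0..T} f"
  shows "continuous_on {t0..} f"
  unfolding continuous_on_eq_continuous_within
proof
  fix t assume "t \<in> {t0..}"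
  then have "continuous (at t within {t0..t + 1}) f"
    using assms[of "t + 1"] by (simp add: continuous_on_eq_continuous_within)
  moreover have "at t within {t0..} = at t within {t0..t + 1}"
    by (rule at_within_nhd[where S = "{..<t + 1}"]) auto
  ultimately show "continuous (at t within {t0..}) f"
    by simp
qed

lemma integral_exp_weight:
  fixes l :: real
  assumes "t0 \<le> t" "l \<noteq> 0"
  shows "((\<lambda>s. exp (l * (s - t0))) has_integral (exp (l * (t - t0)) - 1) / l) {t0..t}"
proof -
  have "((\<lambda>s. exp (l * (s - t0)) / l) has_vector_derivative exp (l * (s - t0)))
      (at s within {t0..t})" for s
    unfolding has_real_derivative_iff_has_vector_derivative[symmetric]
    using assms by (auto intro!: derivative_eq_intros)
  from fundamental_theorem_of_calculus[OF assms(1) this]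
  show ?thesis
    by (simp add: diff_divide_distrib)
qed

lemma abs_integral_le_exp_weight:
  fixes f :: "real \<Rightarrow> real"
  assumes f: "f integrable_on {t0..t}" "\<And>s. s \<in> {t0..t} \<Longrightarrow> \<bar>f s\<bar> \<le> W * exp (l * (s - t0))"
    and t: "t0 \<le> t" and l: "l > 0" and W: "W \<ge> 0"
  shows "\<bar>integral {t0..t} f\<bar> \<le> W * exp (l * (t - t0)) / l"
proof -
  have weight: "integral {t0..t} (\<lambda>s. exp (l * (s - t0))) = (exp (l * (t - t0)) - 1) / l"
    using integral_exp_weight[OF t] l by (simp add: integral_unique)
  have "(\<lambda>s. W * exp (l * (s - t0))) integrable_on {t0..t}"
    by (intro integrable_continuous_interval continuous_intros)
  from integral_norm_bound_integral[OF f(1) this] f(2) weight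
  have "\<bar>integral {t0..t} f\<bar> \<le> W * ((exp (l * (t - t0)) - 1) / l)"
    by simp
  also have "\<dots> \<le> W * exp (l * (t - t0)) / l"
    using W l by (simp add: field_simps)
  finally show ?thesis .
qed

lemma continuous_on_exp_volterra_integral:
  fixes G :: "real \<Rightarrow> real"
  assumes G: "continuous_on {t0..} G"
  shows "continuous_on {t0..} (\<lambda>m. integral {t0..m} (\<lambda>s. exp (q * (m - s)) * G s))"
proof (rule continuous_on_atLeast_if_continuous_on_Icc)
  fix T assume "t0 \<le> T"
  have "continuous_on {t0..T} (\<lambda>m. exp (q * m) * integral {t0..m} (\<lambda>s. exp (-q * s) * G s))"
    by (intro continuous_intros indefinite_integral_continuous_1 integrable_continuous_interval
        continuous_on_subset[OF G]) auto
  moreover have "exp (q * m) * integral {t0..m} (\<lambda>s. exp (-q * s) * G s)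
      = integral {t0..m} (\<lambda>s. exp (q * (m - s)) * G s)" for m
    unfolding integral_mult_right[symmetric]
    by (simp add: mult.assoc[symmetric] exp_add[symmetric] right_diff_distrib)
  ultimately show "continuous_on {t0..T} (\<lambda>m. integral {t0..m} (\<lambda>s. exp (q * (m - s)) * G s))"
    by simp
qed

text \<open>The weighted supremum \<open>W\<close> of \<open>exp (-l * (s - t0)) * \<bar>z s\<bar>\<close> over \<open>[t0, T]\<close>
  satisfies \<open>W \<le> \<epsilon> + A * W / l\<close>, so the choice \<open>l = 2 * A + 1\<close> gives \<open>W \<le> 2 * \<epsilon>\<close>.\<close>

lemma bielecki_bound:
  fixes z :: "real \<Rightarrow> real"
  assumes z: "continuous_on {t0..T} z" and T: "t0 \<le> T" and A: "A \<ge> 0"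
    and step: "\<And>l W t. l \<ge> 1 \<Longrightarrow> W \<ge> 0 \<Longrightarrow> t \<in> {t0..T} \<Longrightarrow>
        (\<And>s. s \<in> {t0..t} \<Longrightarrow> \<bar>z s\<bar> \<le> W * exp (l * (s - t0))) \<Longrightarrow>
        \<bar>z t\<bar> \<le> \<epsilon> + A * (W * exp (l * (t - t0)) / l)"
    and t: "t \<in> {t0..T}"
  shows "\<bar>z t\<bar> \<le> 2 * \<epsilon> * exp ((2 * A + 1) * (T - t0))"
proof -
  define l where "l = 2 * A + 1"
  have l: "l \<ge> 1" "A / l \<le> 1 / 2"
    using A by (auto simp: l_def field_simps)
  define g where "g s = exp (-l * (s - t0)) * \<bar>z s\<bar>" for s
  have "continuous_on {t0..T} g"
    unfolding g_def by (intro continuous_intros z)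
  then obtain sm where sm: "sm \<in> {t0..T}" "\<And>s. s \<in> {t0..T} \<Longrightarrow> g s \<le> g sm"
    using continuous_attains_sup[OF compact_Icc _ \<open>continuous_on {t0..T} g\<close>] T by auto
  define W where "W = g sm"
  have z_eq: "\<bar>z s\<bar> = g s * exp (l * (s - t0))" for s
  proof -
    have "exp (-l * (s - t0)) * exp (l * (s - t0)) = 1"
      by (simp add: exp_minus_inverse mult.commute)
    then show ?thesis
      unfolding g_def by (metis mult.assoc mult.commute mult_1)
  qed
  have W: "W \<ge> 0" "\<bar>z s\<bar> \<le> W * exp (l * (s - t0))" if "s \<in> {t0..T}" for s
    unfolding W_def z_eq using sm(2)[OF that] by (auto simp: g_def mult_right_mono)
  define E where "E = exp (l * (sm - t0))"
  have E: "E \<ge> 1"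
    using sm(1) l by (simp add: E_def)
  have "W * E \<le> \<epsilon> + (A / l) * (W * E)"
    using step[OF l(1) W(1)[OF sm(1)] sm(1)] W(2) sm(1) unfolding E_def W_def z_eq[of sm]
    by (auto simp: W_def)
  moreover have "(A / l) * (W * E) \<le> (1 / 2) * (W * E)"
    using l(2) W(1)[OF sm(1)] E by (intro mult_right_mono) auto
  moreover have "W \<le> W * E"
    using W(1)[OF sm(1)] E by (simp add: mult_le_cancel_left1)
  ultimately have "W \<le> 2 * \<epsilon>"
    by linarith
  then have "W * exp (l * (t - t0)) \<le> 2 * \<epsilon> * exp (l * (T - t0))"
    using W(1)[OF sm(1)] t l by (intro mult_mono) auto
  with W(2)[OF t] show ?thesis
    unfolding l_def by linarith
qed

section \<open>Uniform limits\<close>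

lemma uniform_limit_lim_if_uniformly_Cauchy:
  fixes N :: "real \<Rightarrow> 'a \<Rightarrow> real"
  assumes Cauchy: "\<And>e. e > 0 \<Longrightarrow> \<exists>K. \<forall>\<kappa>\<ge>K. \<forall>\<mu>\<ge>K. \<forall>x\<in>X. \<bar>N \<kappa> x - N \<mu> x\<bar> \<le> e"
  shows "uniform_limit X N (\<lambda>x. lim (\<lambda>n. N (real n) x)) at_top"
proof (rule uniform_limitI)
  have eventually_close: "\<exists>n0. \<forall>n\<ge>n0. \<bar>N \<kappa> x - N (real n) x\<bar> \<le> e"
    if "\<forall>\<kappa>\<ge>K. \<forall>\<mu>\<ge>K. \<forall>x\<in>X. \<bar>N \<kappa> x - N \<mu> x\<bar> \<le> e" "\<kappa> \<ge> K" "x \<in> X" for K e \<kappa> x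
  proof (intro exI[of _ "nat \<lceil>K\<rceil>"] allI impI)
    fix n :: nat assume "nat \<lceil>K\<rceil> \<le> n"
    then have "real n \<ge> K"
      by linarith
    with that show "\<bar>N \<kappa> x - N (real n) x\<bar> \<le> e"
      by blast
  qed
  have convergent: "(\<lambda>n. N (real n) x) \<longlonglongrightarrow> lim (\<lambda>n. N (real n) x)" if "x \<in> X" for x
  proof -
    have "Cauchy (\<lambda>n. N (real n) x)"
    proof (rule metric_CauchyI)
      fix e :: real assume "e > 0"
      then obtain K where K: "\<forall>\<kappa>\<ge>K. \<forall>\<mu>\<ge>K. \<forall>x\<in>X. \<bar>N \<kappa> x - N \<mu> x\<bar> \<le> e / 2"
        using Cauchy[of "e / 2"] by auto
      show "\<exists>M. \<forall>m\<ge>M. \<forall>n\<ge>M. dist (N (real m) x) (N (real n) x) < e"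
      proof (intro exI[of _ "nat \<lceil>K\<rceil>"] allI impI)
        fix m n :: nat assume "nat \<lceil>K\<rceil> \<le> m" "nat \<lceil>K\<rceil> \<le> n"
        then have "real m \<ge> K" "real n \<ge> K"
          by linarith+
        with K \<open>x \<in> X\<close> have "\<bar>N (real m) x - N (real n) x\<bar> \<le> e / 2"
          by blast
        with \<open>e > 0\<close> show "dist (N (real m) x) (N (real n) x) < e"
          by (simp add: dist_real_def)
      qed
    qed
    then show ?thesis
      by (simp add: Cauchy_convergent_iff convergent_LIMSEQ_iff)
  qed
  fix e :: real assume "e > 0"
  then obtain K where K: "\<forall>\<kappa>\<ge>K. \<forall>\<mu>\<ge>K. \<forall>x\<in>X. \<bar>N \<kappa> x - N \<mu> x\<bar> \<le> e / 2"
    using Cauchy[of "e / 2"] by auto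
  have "\<bar>N \<kappa> x - lim (\<lambda>n. N (real n) x)\<bar> \<le> e / 2" if "\<kappa> \<ge> K" "x \<in> X" for \<kappa> x
    using convergent[OF that(2)] eventually_close[OF K that]
    by (intro LIMSEQ_le_const2[of "\<lambda>n. \<bar>N \<kappa> x - N (real n) x\<bar>"] tendsto_intros)
  with \<open>e > 0\<close> show "\<forall>\<^sub>F \<kappa> in at_top. \<forall>x\<in>X. dist (N \<kappa> x) (lim (\<lambda>n. N (real n) x)) < e"
    unfolding eventually_at_top_linorder dist_real_def by (intro exI[of _ K]) fastforce
qed

lemma uniform_limit_if_uniformly_Cauchy_on_Icc:
  fixes N :: "real \<Rightarrow> real \<Rightarrow> real"
  assumes Cauchy: "\<And>T e. t0 \<le> T \<Longrightarrow> e > 0 \<Longrightarrow> \<exists>K. \<forall>\<kappa>\<ge>K. \<forall>\<mu>\<ge>K. \<forall>t\<in>{t0..T}. \<bar>N \<kappa> t - N \<mu> t\<bar> \<le> e"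
    and cont: "\<And>\<kappa>. \<kappa> > 0 \<Longrightarrow> continuous_on {t0..} (N \<kappa>)"
  obtains Nlim where "\<And>T. uniform_limit {t0..T} N Nlim at_top" "continuous_on {t0..} Nlim"
proof
  define Nlim where "Nlim t = lim (\<lambda>n. N (real n) t)" for t
  have unif: "uniform_limit {t0..T} N Nlim at_top" if "t0 \<le> T" for T
    unfolding Nlim_def using Cauchy[OF that] by (rule uniform_limit_lim_if_uniformly_Cauchy)
  show "uniform_limit {t0..T} N Nlim at_top" for T
    using unif[of "max t0 T"] by (rule uniform_limit_on_subset) auto
  show "continuous_on {t0..} Nlim"
  proof (rule continuous_on_atLeast_if_continuous_on_Icc)
    fix T assume "t0 \<le> T"
    have "\<forall>\<^sub>F \<kappa> in at_top. continuous_on {t0..T} (N \<kappa>)"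
      using eventually_gt_at_top[of 0] by eventually_elim (auto intro: continuous_on_subset[OF cont])
    then show "continuous_on {t0..T} Nlim"
      using uniform_limit_theorem[OF _ unif[OF \<open>t0 \<le> T\<close>]] by simp
  qed
qed

lemma absolutely_integrable_bounded_continuous_mult:
  fixes g p :: "real \<Rightarrow> real"
  assumes g: "continuous_on {0..} g" "\<And>b. b \<ge> 0 \<Longrightarrow> \<bar>g b\<bar> \<le> 1"
    and p: "p absolutely_integrable_on {0..}"
  shows "(\<lambda>b. g b * p b) absolutely_integrable_on {0..}"
proof (rule absolutely_integrable_bounded_measurable_product_real[OF _ _ _ p])
  show "{0::real..} \<in> sets lebesgue"
    by simp
  then show "g \<in> borel_measurable (lebesgue_on {0..})"
    by (rule continuous_imp_measurable_on_sets_lebesgue[OF g(1)])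
  show "bounded (g ` {0..})"
    using g(2) by (intro boundedI[where B = 1]) auto
qed

lemma absolutely_integrable_rescaled_shift:
  fixes g p :: "real \<Rightarrow> real"
  assumes g: "continuous_on {0..} g" "\<And>b. b \<ge> 0 \<Longrightarrow> \<bar>g b\<bar> \<le> 1"
    and p: "p absolutely_integrable_on {0..}" and \<kappa>: "\<kappa> > 0" and s: "s \<ge> 0"
  shows "(\<lambda>b. g (b / \<kappa> + s) * p b) absolutely_integrable_on {0..}"
proof (rule absolutely_integrable_bounded_continuous_mult[OF _ _ p])
  have "(\<lambda>b. b / \<kappa> + s) ` {0..} \<subseteq> {0..}"
    using \<kappa> s by auto
  then show "continuous_on {0..} (\<lambda>b. g (b / \<kappa> + s))"
    by (intro continuous_on_compose2[OF g(1)]) (use \<kappa> in \<open>auto intro!: continuous_intros\<close>)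
  show "\<bar>g (b / \<kappa> + s)\<bar> \<le> 1" if "b \<ge> 0" for b
    using g(2) that \<kappa> s by simp
qed

lemma uniformly_continuous_on_if_eventually_zero:
  fixes g :: "real \<Rightarrow> real"
  assumes g: "continuous_on {0..} g" and zero: "\<And>a. a \<ge> c \<Longrightarrow> g a = 0"
  shows "uniformly_continuous_on {0..} g"
  unfolding uniformly_continuous_on_def
proof (intro allI impI)
  fix e :: real assume "e > 0"
  define M where "M = max 0 c + 1"
  have "uniformly_continuous_on {0..M} g"
    by (rule compact_uniformly_continuous[OF continuous_on_subset[OF g]]) auto
  then obtain d where d: "d > 0"
    "\<And>u v. u \<in> {0..M} \<Longrightarrow> v \<in> {0..M} \<Longrightarrow> dist v u < d \<Longrightarrow> dist (g v) (g u) < e"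
    unfolding uniformly_continuous_on_def using \<open>e > 0\<close> by metis
  show "\<exists>d>0. \<forall>u\<in>{0..}. \<forall>v\<in>{0..}. dist v u < d \<longrightarrow> dist (g v) (g u) < e"
  proof (intro exI[of _ "min d 1"] conjI ballI impI)
    fix u v :: real assume uv: "u \<in> {0..}" "v \<in> {0..}" "dist v u < min d 1"
    show "dist (g v) (g u) < e"
    proof (cases "u \<le> M \<and> v \<le> M")
      case True
      then show ?thesis
        using d(2) uv by auto
    next
      case False
      then have "u \<ge> c" "v \<ge> c"
        using uv unfolding M_def dist_real_def by auto
      then show ?thesis
        using zero \<open>e > 0\<close> by simp
    qed
  qed (use d in auto)
qed

text \<open>A continuous substitute for the indicator function of \<open>[n + 1, \<infinity>)\<close>, so that its products
  with integrable functions are covered by \<open>absolutely_integrable_bounded_continuous_mult\<close>.\<close>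

definition tail_cutoff :: "nat \<Rightarrow> real \<Rightarrow> real" where
  "tail_cutoff n b = min 1 (max 0 (b - real n))"

lemma integrable_tail_cutoff_mult:
  "p absolutely_integrable_on {0..} \<Longrightarrow> (\<lambda>b. tail_cutoff n b * p b) integrable_on {0..}"
  unfolding tail_cutoff_def
  by (intro set_lebesgue_integral_eq_integral(1) absolutely_integrable_bounded_continuous_mult
      continuous_intros) auto

lemma tail_cutoff_integral_tendsto_zero:
  fixes p :: "real \<Rightarrow> real"
  assumes p: "p integrable_on {0..}" "\<And>a. a \<ge> 0 \<Longrightarrow> p a \<ge> 0"
  shows "(\<lambda>n. integral {0..} (\<lambda>b. tail_cutoff n b * p b)) \<longlonglongrightarrow> 0"
proof -
  have "p absolutely_integrable_on {0..}"
    using p by (intro nonnegative_absolutely_integrable_1) auto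
  then have integrable: "(\<lambda>b. tail_cutoff n b * p b) integrable_on {0..}" for n
    by (rule integrable_tail_cutoff_mult)
  have dominated: "norm (tail_cutoff n b * p b) \<le> p b" if "b \<in> {0..}" for n b
    using p(2)[of b] that by (simp add: tail_cutoff_def abs_mult mult_left_le_one_le)
  have pointwise: "(\<lambda>n. tail_cutoff n b * p b) \<longlonglongrightarrow> 0" for b
  proof (rule tendsto_eventually)
    show "\<forall>\<^sub>F n in sequentially. tail_cutoff n b * p b = 0"
      using eventually_ge_at_top[of "nat \<lceil>b\<rceil>"]
    proof eventually_elim
      case (elim n)
      then have "b \<le> real n"
        by linarith
      then show ?case
        by (simp add: tail_cutoff_def)
    qed
  qed
  from dominated_convergence(2)[of "\<lambda>n b. tail_cutoff n b * p b" "{0..}" p "\<lambda>_. 0",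
      OF integrable p(1) dominated pointwise]
  show ?thesis
    by simp
qed

lemma abs_shift_diff_le_tail_cutoff:
  fixes g :: "real \<Rightarrow> real"
  assumes g: "\<And>a. a \<ge> 0 \<Longrightarrow> \<bar>g a\<bar> \<le> 1"
    and modulus: "\<And>u v. u \<ge> 0 \<Longrightarrow> v \<ge> 0 \<Longrightarrow> \<bar>v - u\<bar> < d \<Longrightarrow> \<bar>g v - g u\<bar> \<le> \<eta>" and "\<eta> \<ge> 0"
    and \<kappa>: "\<kappa> > 0" "real n + 1 < \<kappa> * d" and s: "s \<ge> 0" and b: "b \<ge> 0"
  shows "\<bar>g (b / \<kappa> + s) - g s\<bar> \<le> \<eta> + 2 * tail_cutoff n b"
proof (cases "b \<le> real n + 1")
  case True
  then have "b / \<kappa> < d"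
    using \<kappa> by (simp add: divide_less_eq mult.commute)
  then have "\<bar>g (b / \<kappa> + s) - g s\<bar> \<le> \<eta>"
    using modulus[of s "b / \<kappa> + s"] b s \<kappa>(1) by simp
  then show ?thesis
    by (intro add_increasing2[rotated]) (simp_all add: tail_cutoff_def)
next
  case False
  have "\<bar>g (b / \<kappa> + s) - g s\<bar> \<le> \<bar>g (b / \<kappa> + s)\<bar> + \<bar>g s\<bar>"
    by (rule abs_triangle_ineq4)
  also have "\<dots> \<le> 2"
    using g[of "b / \<kappa> + s"] g[of s] b s \<kappa>(1) by simp
  moreover have "tail_cutoff n b = 1"
    using False by (simp add: tail_cutoff_def)
  ultimately show ?thesis
    using \<open>\<eta> \<ge> 0\<close> by linarith
qed

lemma abs_rescaled_average_diff_le: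
  fixes g p :: "real \<Rightarrow> real"
  assumes g: "continuous_on {0..} g" "\<And>a. a \<ge> 0 \<Longrightarrow> \<bar>g a\<bar> \<le> 1"
    and p: "p integrable_on {0..}" "\<And>a. a \<ge> 0 \<Longrightarrow> p a \<ge> 0" "integral {0..} p = 1"
    and modulus: "\<And>u v. u \<ge> 0 \<Longrightarrow> v \<ge> 0 \<Longrightarrow> \<bar>v - u\<bar> < d \<Longrightarrow> \<bar>g v - g u\<bar> \<le> \<eta>" and "\<eta> \<ge> 0"
    and \<kappa>: "\<kappa> > 0" "real n + 1 < \<kappa> * d" and s: "s \<ge> 0"
  shows "\<bar>integral {0..} (\<lambda>b. g (b / \<kappa> + s) * p b) - g s\<bar>
    \<le> \<eta> + 2 * integral {0..} (\<lambda>b. tail_cutoff n b * p b)"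
proof -
  have pa: "p absolutely_integrable_on {0..}"
    using p by (intro nonnegative_absolutely_integrable_1) auto
  have shifted: "(\<lambda>b. g (b / \<kappa> + s) * p b) integrable_on {0..}"
    by (intro set_lebesgue_integral_eq_integral(1) absolutely_integrable_rescaled_shift g pa \<kappa>(1) s)
  have cutoff: "(\<lambda>b. tail_cutoff n b * p b) integrable_on {0..}"
    using pa by (rule integrable_tail_cutoff_mult)
  have bound: "\<bar>g (b / \<kappa> + s) * p b - g s * p b\<bar> \<le> \<eta> * p b + 2 * (tail_cutoff n b * p b)"
    if b: "b \<in> {0..}" for b
  proof -
    have "\<bar>g (b / \<kappa> + s) - g s\<bar> \<le> \<eta> + 2 * tail_cutoff n b"
      by (rule abs_shift_diff_le_tail_cutoff[where d = d]) (use g(2) modulus \<open>\<eta> \<ge> 0\<close> \<kappa> s b in auto)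
    then have "\<bar>g (b / \<kappa> + s) - g s\<bar> * p b \<le> (\<eta> + 2 * tail_cutoff n b) * p b"
      using p(2) b by (intro mult_right_mono) auto
    moreover have "\<bar>g (b / \<kappa> + s) * p b - g s * p b\<bar> = \<bar>g (b / \<kappa> + s) - g s\<bar> * p b"
      using p(2) b by (simp add: left_diff_distrib[symmetric] abs_mult)
    ultimately show ?thesis
      by (simp add: distrib_right)
  qed
  have "integral {0..} (\<lambda>b. g (b / \<kappa> + s) * p b) - g s
      = integral {0..} (\<lambda>b. g (b / \<kappa> + s) * p b - g s * p b)"
    using integral_diff[OF shifted integrable_on_mult_right[OF p(1), of "g s"]] p(3) by simp
  also have "norm \<dots> \<le> integral {0..} (\<lambda>b. \<eta> * p b + 2 * (tail_cutoff n b * p b))"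
    by (rule integral_norm_bound_integral[OF integrable_diff[OF shifted integrable_on_mult_right[OF p(1)]]
          integrable_add[OF integrable_on_mult_right[OF p(1)] integrable_on_mult_right[OF cutoff]]])
      (use bound in simp)
  also have "\<dots> = \<eta> + 2 * integral {0..} (\<lambda>b. tail_cutoff n b * p b)"
    by (subst integral_add[OF integrable_on_mult_right[OF p(1)] integrable_on_mult_right[OF cutoff]])
      (simp_all add: p(3))
  finally show ?thesis
    by simp
qed

lemma uniform_limit_rescaled_average:
  fixes g p :: "real \<Rightarrow> real"
  assumes g: "uniformly_continuous_on {0..} g" "\<And>a. a \<ge> 0 \<Longrightarrow> \<bar>g a\<bar> \<le> 1"
    and p: "p integrable_on {0..}" "\<And>a. a \<ge> 0 \<Longrightarrow> p a \<ge> 0" "integral {0..} p = 1"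
  shows "uniform_limit {0..} (\<lambda>\<kappa> s. integral {0..} (\<lambda>b. g (b / \<kappa> + s) * p b)) g at_top"
proof (rule uniform_limitI)
  fix e :: real assume "e > 0"
  obtain d where d: "d > 0" "\<forall>u\<in>{0..}. \<forall>v\<in>{0..}. dist v u < d \<longrightarrow> dist (g v) (g u) < e / 2"
    using g(1) \<open>e > 0\<close> unfolding uniformly_continuous_on_def by (meson half_gt_zero)
  have modulus: "\<bar>g v - g u\<bar> \<le> e / 2" if "u \<ge> 0" "v \<ge> 0" "\<bar>v - u\<bar> < d" for u v
  proof -
    have "dist (g v) (g u) < e / 2"
      using d(2)[rule_format, of u v] that by (simp add: dist_real_def)
    then show ?thesis
      by (simp add: dist_real_def)
  qed
  have "(\<lambda>n. integral {0..} (\<lambda>b. tail_cutoff n b * p b)) \<longlonglongrightarrow> 0"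
    using p(1,2) by (rule tail_cutoff_integral_tendsto_zero)
  then obtain n where "norm (integral {0..} (\<lambda>b. tail_cutoff n b * p b) - 0) < e / 8"
    using LIMSEQ_D[of _ 0 "e / 8"] \<open>e > 0\<close> by (meson order_refl zero_less_divide_iff zero_less_numeral)
  then have n: "integral {0..} (\<lambda>b. tail_cutoff n b * p b) < e / 8"
    by simp
  have "\<bar>integral {0..} (\<lambda>b. g (b / \<kappa> + s) * p b) - g s\<bar> < e"
    if \<kappa>: "(real n + 1) / d + 1 \<le> \<kappa>" and s: "s \<ge> 0" for \<kappa> s
  proof -
    have "(real n + 1) / d \<ge> 0"
      using d(1) by simp
    with \<kappa> have "\<kappa> > 0" "(real n + 1) / d < \<kappa>"
      by linarith+
    then have "real n + 1 < \<kappa> * d"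
      using pos_divide_less_eq[OF d(1)] by simp
    with \<open>\<kappa> > 0\<close> s \<open>e > 0\<close> have "\<bar>integral {0..} (\<lambda>b. g (b / \<kappa> + s) * p b) - g s\<bar>
        \<le> e / 2 + 2 * integral {0..} (\<lambda>b. tail_cutoff n b * p b)"
      by (intro abs_rescaled_average_diff_le uniformly_continuous_imp_continuous g p modulus) auto
    with n \<open>e > 0\<close> show ?thesis
      by linarith
  qed
  then show "\<forall>\<^sub>F \<kappa> in at_top. \<forall>s\<in>{0..}. dist (integral {0..} (\<lambda>b. g (b / \<kappa> + s) * p b)) (g s) < e"
    unfolding eventually_at_top_linorder dist_real_def by (intro exI[of _ "(real n + 1) / d + 1"]) auto
qed

section \<open>Volterra integrals with bounded kernels\<close>

locale volterra_kernel =
  fixes k :: "real \<Rightarrow> real"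
  assumes kernel_continuous: "continuous_on {0..} k"
    and kernel_bounded: "\<And>a. a \<ge> 0 \<Longrightarrow> \<bar>k a\<bar> \<le> 1"
begin

lemma integrable_volterra:
  assumes "continuous_on {t0..} x"
  shows "(\<lambda>u. k (t - u) * x u) integrable_on {t0..t}"
  by (intro integrable_continuous_interval continuous_intros
      continuous_on_compose2[OF kernel_continuous] continuous_on_subset[OF assms]) auto

lemma volterra_reflect:
  assumes x: "continuous_on {t0..} x" and t: "t0 \<le> t"
  shows "integral {0..t - t0} (\<lambda>a. k a * x (t - a)) = integral {t0..t} (\<lambda>u. k (t - u) * x u)"
proof -
  have "((\<lambda>u. k (t - u) * x u) has_integral integral {t0..t} (\<lambda>u. k (t - u) * x u)) (cbox t0 t)"
    using integrable_volterra[OF x] by (simp add: integrable_integral)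
  from has_integral_affinity[OF this, of "-1" t]
  have "((\<lambda>a. k a * x (t - a)) has_integral integral {t0..t} (\<lambda>u. k (t - u) * x u))
      ((\<lambda>u. t - u) ` {t0..t})"
    by (simp add: algebra_simps)
  moreover have "(\<lambda>u. t - u) ` {t0..t} = {0..t - t0}"
    by (auto intro!: image_eqI[where x = "t - _"])
  ultimately show ?thesis
    by (simp add: integral_unique)
qed

lemma volterra_diff:
  assumes "continuous_on {t0..} x" "continuous_on {t0..} y"
  shows "integral {t0..t} (\<lambda>u. k (t - u) * x u) - integral {t0..t} (\<lambda>u. k (t - u) * y u)
    = integral {t0..t} (\<lambda>u. k (t - u) * (x u - y u))"
  using integral_diff[OF integrable_volterra[OF assms(1)] integrable_volterra[OF assms(2)]]
  by (simp add: right_diff_distrib)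

lemma abs_volterra_le:
  assumes z: "continuous_on {t0..} z"
  shows "\<bar>integral {t0..t} (\<lambda>u. k (t - u) * z u)\<bar> \<le> integral {t0..t} (\<lambda>u. \<bar>z u\<bar>)"
proof -
  have "(\<lambda>u. \<bar>z u\<bar>) integrable_on {t0..t}"
    by (intro integrable_continuous_interval continuous_intros continuous_on_subset[OF z]) auto
  moreover have "\<bar>k (t - u) * z u\<bar> \<le> \<bar>z u\<bar>" if "u \<in> {t0..t}" for u
    using kernel_bounded[of "t - u"] that by (simp add: abs_mult mult_left_le_one_le)
  ultimately show ?thesis
    using integral_norm_bound_integral[OF integrable_volterra[OF z]] by simp
qed

lemma abs_volterra_le_const:
  assumes z: "continuous_on {t0..} z" "\<And>s. s \<in> {t0..t} \<Longrightarrow> \<bar>z s\<bar> \<le> K" and t: "t0 \<le> t"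
  shows "\<bar>integral {t0..t} (\<lambda>u. k (t - u) * z u)\<bar> \<le> K * (t - t0)"
proof -
  have "continuous_on {t0..t} (\<lambda>u. \<bar>z u\<bar>)"
    by (intro continuous_intros continuous_on_subset[OF z(1)]) auto
  from integral_bound[OF t this, of K] z(2)
  have "integral {t0..t} (\<lambda>u. \<bar>z u\<bar>) \<le> K * (t - t0)"
    by simp
  with abs_volterra_le[OF z(1), of t] show ?thesis
    by linarith
qed

lemma abs_volterra_le_exp_weight:
  assumes z: "continuous_on {t0..} z" "\<And>s. s \<in> {t0..t} \<Longrightarrow> \<bar>z s\<bar> \<le> W * exp (l * (s - t0))"
    and t: "t0 \<le> t" and l: "l > 0" and W: "W \<ge> 0"
  shows "\<bar>integral {t0..t} (\<lambda>u. k (t - u) * z u)\<bar> \<le> W * exp (l * (t - t0)) / l"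
proof -
  have "(\<lambda>u. \<bar>z u\<bar>) integrable_on {t0..t}"
    by (intro integrable_continuous_interval continuous_intros continuous_on_subset[OF z(1)]) auto
  then have "\<bar>integral {t0..t} (\<lambda>u. \<bar>z u\<bar>)\<bar> \<le> W * exp (l * (t - t0)) / l"
    using z(2) t l W by (intro abs_integral_le_exp_weight) auto
  with abs_volterra_le[OF z(1), of t] show ?thesis
    by linarith
qed

end

section \<open>The model operators\<close>

locale sirs_parameters =
  fixes t0 \<nu> D \<delta> S0 R0 I0 :: real
  assumes nu_nonneg: "\<nu> \<ge> 0" and decay_nonneg: "\<nu> + D \<ge> 0" and delta_nonneg: "\<delta> \<ge> 0"
    and S0_nonneg: "S0 \<ge> 0" and R0_nonneg: "R0 \<ge> 0" and I0_nonneg: "I0 \<ge> 0"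
begin

sublocale infection: volterra_kernel "\<lambda>a. exp (-(\<nu> + D) * a)"
proof
  show "\<bar>exp (-(\<nu> + D) * a)\<bar> \<le> 1" if "a \<ge> 0" for a
    using mult_nonneg_nonneg[OF decay_nonneg that] by (simp add: algebra_simps)
qed (intro continuous_intros)

sublocale recovery: volterra_kernel "\<lambda>a. exp (-\<delta> * a)"
proof
  show "\<bar>exp (-\<delta> * a)\<bar> \<le> 1" if "a \<ge> 0" for a
    using mult_nonneg_nonneg[OF delta_nonneg that] by simp
qed (intro continuous_intros)

abbreviation F :: "(real \<Rightarrow> real) \<Rightarrow> real \<Rightarrow> real" where
  "F \<equiv> F_op t0 \<nu> D \<delta> S0 R0 I0"

abbreviation R :: "(real \<Rightarrow> real) \<Rightarrow> real \<Rightarrow> real" where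
  "R \<equiv> R_fn t0 \<nu> D \<delta> R0 I0"

text \<open>The total infected population \<open>I(s)\<close>, i.e. the bracket inside \<^const>\<open>R_fn\<close> after the
  substitution \<open>u = s - a\<close>.\<close>

definition infected :: "(real \<Rightarrow> real) \<Rightarrow> real \<Rightarrow> real" where
  "infected x s = exp (-(\<nu> + D) * (s - t0)) * I0
     + integral {t0..s} (\<lambda>u. exp (-(\<nu> + D) * (s - u)) * x u)"

definition F_bound :: "real \<Rightarrow> real \<Rightarrow> real" where
  "F_bound T K = S0 + (T - t0) * (K + \<delta> * (R0 + \<nu> * (T - t0) * (I0 + K * (T - t0))))"

lemma F_bound_nonneg: "t0 \<le> T \<Longrightarrow> K \<ge> 0 \<Longrightarrow> F_bound T K \<ge> 0"
  unfolding F_bound_def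
  using nu_nonneg delta_nonneg S0_nonneg R0_nonneg I0_nonneg by simp

lemma R_fn_eq_infected:
  assumes x: "continuous_on {t0..} x"
  shows "R x m = exp (-\<delta> * (m - t0)) * R0 + \<nu> * integral {t0..m} (\<lambda>s. exp (-\<delta> * (m - s)) * infected x s)"
proof -
  have "integral {0..s - t0} (\<lambda>a. exp (-(\<nu> + D) * a) * x (s - a))
      = integral {t0..s} (\<lambda>u. exp (-(\<nu> + D) * (s - u)) * x u)" if "s \<in> {t0..m}" for s
    using infection.volterra_reflect[OF x, of s] that by simp
  then have "integral {t0..m} (\<lambda>s. exp (-\<delta> * (m - s)) * (exp (-(\<nu> + D) * (s - t0)) * I0
        + integral {0..s - t0} (\<lambda>a. exp (-(\<nu> + D) * a) * x (s - a))))
      = integral {t0..m} (\<lambda>s. exp (-\<delta> * (m - s)) * infected x s)"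
    unfolding infected_def by (intro integral_cong) simp
  then show ?thesis
    by (simp add: R_fn_def)
qed

lemma continuous_on_infected:
  "continuous_on {t0..} x \<Longrightarrow> continuous_on {t0..} (infected x)"
  unfolding infected_def by (intro continuous_intros continuous_on_exp_volterra_integral)

lemma continuous_on_R_fn:
  assumes "continuous_on {t0..} x"
  shows "continuous_on {t0..} (R x)"
  unfolding R_fn_eq_infected[OF assms]
  by (intro continuous_intros continuous_on_exp_volterra_integral continuous_on_infected assms)

lemma abs_infected_le:
  assumes x: "continuous_on {t0..} x" "\<And>u. u \<in> {t0..T} \<Longrightarrow> \<bar>x u\<bar> \<le> K" and s: "s \<in> {t0..T}"
  shows "\<bar>infected x s\<bar> \<le> I0 + K * (T - t0)"
proof -
  have "K \<ge> 0"
    using x(2)[of t0] s by fastforce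
  have "\<bar>exp (-(\<nu> + D) * (s - t0)) * I0\<bar> \<le> I0"
    using infection.kernel_bounded[of "s - t0"] s I0_nonneg
    by (simp add: abs_mult mult_left_le_one_le)
  moreover have "\<bar>integral {t0..s} (\<lambda>u. exp (-(\<nu> + D) * (s - u)) * x u)\<bar> \<le> K * (s - t0)"
    using infection.abs_volterra_le_const[OF x(1)] x(2) s by simp
  moreover have "K * (s - t0) \<le> K * (T - t0)"
    using \<open>K \<ge> 0\<close> s by (intro mult_left_mono) auto
  ultimately show ?thesis
    unfolding infected_def by linarith
qed

lemma abs_infected_diff_le:
  assumes x: "continuous_on {t0..} x" and y: "continuous_on {t0..} y" and s: "t0 \<le> s"
    and l: "l > 0" and W: "W \<ge> 0"
    and xy: "\<And>u. u \<in> {t0..s} \<Longrightarrow> \<bar>x u - y u\<bar> \<le> W * exp (l * (u - t0))"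
  shows "\<bar>infected x s - infected y s\<bar> \<le> W * exp (l * (s - t0)) / l"
proof -
  have "infected x s - infected y s = integral {t0..s} (\<lambda>u. exp (-(\<nu> + D) * (s - u)) * (x u - y u))"
    unfolding infected_def using infection.volterra_diff[OF x y] by simp
  also have "\<bar>\<dots>\<bar> \<le> W * exp (l * (s - t0)) / l"
    using x y xy s l W
    by (intro infection.abs_volterra_le_exp_weight continuous_intros) auto
  finally show ?thesis .
qed

lemma abs_R_fn_le:
  assumes x: "continuous_on {t0..} x" "\<And>u. u \<in> {t0..T} \<Longrightarrow> \<bar>x u\<bar> \<le> K" and m: "m \<in> {t0..T}"
  shows "\<bar>R x m\<bar> \<le> R0 + \<nu> * (T - t0) * (I0 + K * (T - t0))"
proof -
  have "K \<ge> 0"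
    using x(2)[of t0] m by fastforce
  have "\<bar>exp (-\<delta> * (m - t0)) * R0\<bar> \<le> R0"
    using recovery.kernel_bounded[of "m - t0"] m R0_nonneg
    by (simp add: abs_mult mult_left_le_one_le)
  moreover have "\<bar>\<nu> * integral {t0..m} (\<lambda>s. exp (-\<delta> * (m - s)) * infected x s)\<bar>
      \<le> \<nu> * (T - t0) * (I0 + K * (T - t0))"
  proof -
    have "\<bar>integral {t0..m} (\<lambda>s. exp (-\<delta> * (m - s)) * infected x s)\<bar> \<le> (I0 + K * (T - t0)) * (m - t0)"
      using m abs_infected_le[OF x]
      by (intro recovery.abs_volterra_le_const continuous_on_infected x) auto
    also have "\<dots> \<le> (I0 + K * (T - t0)) * (T - t0)"
      using \<open>K \<ge> 0\<close> I0_nonneg m by (intro mult_left_mono) auto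
    also have "\<dots> = (T - t0) * (I0 + K * (T - t0))"
      by (rule mult.commute)
    finally show ?thesis
      using nu_nonneg by (simp add: abs_mult mult.assoc mult_left_mono)
  qed
  ultimately show ?thesis
    unfolding R_fn_eq_infected[OF x(1)] by (rule order_trans[OF abs_triangle_ineq add_mono])
qed

lemma abs_R_fn_diff_le:
  assumes x: "continuous_on {t0..} x" and y: "continuous_on {t0..} y" and m: "t0 \<le> m"
    and l: "l > 0" and W: "W \<ge> 0"
    and xy: "\<And>u. u \<in> {t0..m} \<Longrightarrow> \<bar>x u - y u\<bar> \<le> W * exp (l * (u - t0))"
  shows "\<bar>R x m - R y m\<bar> \<le> \<nu> * (W * exp (l * (m - t0)) / l\<^sup>2)"
proof -
  have "\<bar>R x m - R y m\<bar>
      = \<nu> * \<bar>integral {t0..m} (\<lambda>s. exp (-\<delta> * (m - s)) * (infected x s - infected y s))\<bar>"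
    unfolding R_fn_eq_infected[OF x] R_fn_eq_infected[OF y]
    using recovery.volterra_diff[OF continuous_on_infected[OF x] continuous_on_infected[OF y]] nu_nonneg
    by (simp add: right_diff_distrib[symmetric] abs_mult)
  also have "\<dots> \<le> \<nu> * (W / l * exp (l * (m - t0)) / l)"
    using m l W xy abs_infected_diff_le[OF x y] nu_nonneg
    by (intro mult_left_mono recovery.abs_volterra_le_exp_weight continuous_intros
        continuous_on_infected x y) auto
  finally show ?thesis
    by (simp add: power2_eq_square)
qed

lemma abs_F_le:
  assumes x: "continuous_on {t0..} x" "\<And>u. u \<in> {t0..T} \<Longrightarrow> \<bar>x u\<bar> \<le> K" and t: "t \<in> {t0..T}"
  shows "\<bar>F x t\<bar> \<le> F_bound T K"
proof -
  define C where "C = K + \<delta> * (R0 + \<nu> * (T - t0) * (I0 + K * (T - t0)))"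
  have "C \<ge> 0"
    using x(2)[of t0] t F_bound_nonneg[of T K] unfolding C_def F_bound_def
    using nu_nonneg delta_nonneg R0_nonneg I0_nonneg by simp
  have "\<bar>x m - \<delta> * R x m\<bar> \<le> C" if "m \<in> {t0..t}" for m
  proof -
    have "\<bar>x m - \<delta> * R x m\<bar> \<le> \<bar>x m\<bar> + \<delta> * \<bar>R x m\<bar>"
      using abs_triangle_ineq4[of "x m" "\<delta> * R x m"] delta_nonneg by (simp add: abs_mult)
    also have "\<dots> \<le> C"
      unfolding C_def using that t x(2)[of m] abs_R_fn_le[of x T K m, OF x] delta_nonneg
      by (intro add_mono mult_left_mono) auto
    finally show ?thesis .
  qed
  moreover have "continuous_on {t0..t} (\<lambda>m. x m - \<delta> * R x m)"
    using continuous_on_subset[OF x(1), of "{t0..t}"]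
      continuous_on_subset[OF continuous_on_R_fn[OF x(1)], of "{t0..t}"] t
    by (intro continuous_intros) auto
  ultimately have "\<bar>integral {t0..t} (\<lambda>m. x m - \<delta> * R x m)\<bar> \<le> C * (t - t0)"
    using integral_bound[of t0 t "\<lambda>m. x m - \<delta> * R x m" C] t by auto
  also have "\<dots> \<le> C * (T - t0)"
    using \<open>C \<ge> 0\<close> t by (intro mult_left_mono) auto
  finally show ?thesis
    unfolding F_op_def F_bound_def C_def using S0_nonneg by (simp add: mult.commute abs_triangle_ineq4)
qed

lemma abs_F_diff_le:
  assumes x: "continuous_on {t0..} x" and y: "continuous_on {t0..} y" and t: "t0 \<le> t"
    and l: "l \<ge> 1" and W: "W \<ge> 0"
    and xy: "\<And>s. s \<in> {t0..t} \<Longrightarrow> \<bar>x s - y s\<bar> \<le> W * exp (l * (s - t0))"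
  shows "\<bar>F x t - F y t\<bar> \<le> (1 + \<delta> * \<nu>) * W * exp (l * (t - t0)) / l"
proof -
  let ?f = "\<lambda>x m. x m - \<delta> * R x m"
  have integrable: "?f x integrable_on {t0..t}" if "continuous_on {t0..} x" for x
    by (intro integrable_continuous_interval continuous_intros continuous_on_subset[OF that]
        continuous_on_subset[OF continuous_on_R_fn[OF that]]) auto
  have "F x t - F y t = integral {t0..t} (\<lambda>m. ?f y m - ?f x m)"
    unfolding F_op_def integral_diff[OF integrable[OF y] integrable[OF x]] by simp
  moreover have "\<bar>?f y s - ?f x s\<bar> \<le> (1 + \<delta> * \<nu>) * W * exp (l * (s - t0))" if s: "s \<in> {t0..t}" for s
  proof -
    have "\<bar>?f y s - ?f x s\<bar> = \<bar>(y s - x s) + \<delta> * (R x s - R y s)\<bar>"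
      by (simp add: algebra_simps)
    also have "\<dots> \<le> \<bar>x s - y s\<bar> + \<delta> * \<bar>R x s - R y s\<bar>"
      using abs_triangle_ineq[of "y s - x s" "\<delta> * (R x s - R y s)"] delta_nonneg
      by (simp add: abs_mult abs_minus_commute)
    also have "\<dots> \<le> W * exp (l * (s - t0)) + \<delta> * (\<nu> * (W * exp (l * (s - t0)) / l\<^sup>2))"
      using xy s abs_R_fn_diff_le[OF x y, of s l W] l W delta_nonneg
      by (intro add_mono mult_left_mono) auto
    also have "\<dots> \<le> W * exp (l * (s - t0)) + \<delta> * (\<nu> * (W * exp (l * (s - t0)) / 1))"
      using l W delta_nonneg nu_nonneg
      by (intro add_mono mult_left_mono divide_left_mono) (auto simp: one_le_power)
    finally show ?thesis
      by (simp add: algebra_simps)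
  qed
  ultimately show ?thesis
    using abs_integral_le_exp_weight[OF integrable_diff[OF integrable[OF y] integrable[OF x]]] t l W
      delta_nonneg nu_nonneg by simp
qed

lemma continuous_on_Gamma_fn:
  "continuous_on {0..} \<beta> \<Longrightarrow> continuous_on {0..} (Gamma_fn \<nu> D \<beta>)"
  unfolding Gamma_fn_def[abs_def] by (intro continuous_intros)

lemma abs_Gamma_fn_le:
  assumes "\<And>a. a \<ge> 0 \<Longrightarrow> \<bar>\<beta> a\<bar> \<le> 1" and "a \<ge> 0"
  shows "\<bar>Gamma_fn \<nu> D \<beta> a\<bar> \<le> 1"
  unfolding Gamma_fn_def abs_mult
  using infection.kernel_bounded[OF \<open>a \<ge> 0\<close>] assms by (intro mult_le_one) auto

lemma Lambda_fn_rescaled: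
  fixes \<beta> p :: "real \<Rightarrow> real"
  assumes \<kappa>: "\<kappa> > 0" and t: "t0 \<le> t"
    and \<beta>: "continuous_on {0..} \<beta>" "\<And>a. a \<ge> 0 \<Longrightarrow> \<bar>\<beta> a\<bar> \<le> 1"
    and p: "p absolutely_integrable_on {0..}"
  shows "Lambda_fn t0 \<nu> D I0 \<beta> p \<kappa> t
    = exp (-(\<nu> + D) * (t - t0)) * I0 * integral {0..} (\<lambda>b. \<beta> (b / \<kappa> + (t - t0)) * p b)"
proof -
  define s where "s = t - t0"
  define f where "f b = I0 * (\<beta> (b / \<kappa> + s) * p b)" for b
  have "(\<lambda>b. \<beta> (b / \<kappa> + s) * p b) absolutely_integrable_on {0..}"
    unfolding s_def using t by (intro absolutely_integrable_rescaled_shift \<beta> p \<kappa>) auto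
  from absolutely_integrable_scaleR_left[OF this, of I0]
  have "f absolutely_integrable_on {0..}"
    by (simp add: f_def[abs_def])
  moreover have "(\<lambda>a. \<kappa> * a) ` {0..} = {0..}"
    using \<kappa> by (auto intro!: image_eqI[where x = "_ / \<kappa>"])
  moreover have "((\<lambda>a. \<kappa> * a) has_field_derivative \<kappa>) (at a within {0..})" for a
    by (auto intro!: derivative_eq_intros)
  moreover have "inj_on (\<lambda>a. \<kappa> * a) {0..}"
    using \<kappa> by (auto simp: inj_on_def)
  ultimately have "integral {0..} (\<lambda>a. \<bar>\<kappa>\<bar> * f (\<kappa> * a)) = integral {0..} f"
    using has_absolute_integral_change_of_variables_1'[of "{0..}" "\<lambda>a. \<kappa> * a" "\<lambda>_. \<kappa>" f "integral {0..} f"]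
    by simp
  moreover have "integral {0..} (\<lambda>a. \<bar>\<kappa>\<bar> * f (\<kappa> * a))
      = integral {0..} (\<lambda>a. \<beta> (a + s) * (I0 * \<kappa> * p (\<kappa> * a)))"
    using \<kappa> by (intro integral_cong) (simp add: f_def)
  ultimately have "integral {0..} (\<lambda>a. \<beta> (a + s) * (I0 * \<kappa> * p (\<kappa> * a))) = integral {0..} f"
    by simp
  also have "\<dots> = I0 * integral {0..} (\<lambda>b. \<beta> (b / \<kappa> + s) * p b)"
    by (simp add: f_def[abs_def])
  finally show ?thesis
    unfolding Lambda_fn_def s_def[symmetric] by (simp add: mult.assoc)
qed

lemma abs_Lambda_fn_diff_le:
  fixes \<beta> p :: "real \<Rightarrow> real"
  assumes \<kappa>: "\<kappa> > 0" and t: "t0 \<le> t"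
    and \<beta>: "continuous_on {0..} \<beta>" "\<And>a. a \<ge> 0 \<Longrightarrow> \<bar>\<beta> a\<bar> \<le> 1"
    and p: "p absolutely_integrable_on {0..}"
  shows "\<bar>Lambda_fn t0 \<nu> D I0 \<beta> p \<kappa> t - c * Gamma_fn \<nu> D \<beta> (t - t0)\<bar>
    \<le> \<bar>I0 * integral {0..} (\<lambda>b. \<beta> (b / \<kappa> + (t - t0)) * p b) - c * \<beta> (t - t0)\<bar>"
proof -
  have "Lambda_fn t0 \<nu> D I0 \<beta> p \<kappa> t
      = exp (-(\<nu> + D) * (t - t0)) * I0 * integral {0..} (\<lambda>b. \<beta> (b / \<kappa> + (t - t0)) * p b)"
    by (intro Lambda_fn_rescaled \<kappa> t \<beta> p)
  then have "Lambda_fn t0 \<nu> D I0 \<beta> p \<kappa> t - c * Gamma_fn \<nu> D \<beta> (t - t0)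
      = exp (-(\<nu> + D) * (t - t0)) * (I0 * integral {0..} (\<lambda>b. \<beta> (b / \<kappa> + (t - t0)) * p b) - c * \<beta> (t - t0))"
    unfolding Gamma_fn_def by (simp add: algebra_simps)
  then show ?thesis
    using infection.kernel_bounded[of "t - t0"] t by (simp add: abs_mult mult_left_le_one_le)
qed

lemma abs_Lambda_fn_le:
  fixes \<beta> p :: "real \<Rightarrow> real"
  assumes \<kappa>: "\<kappa> > 0" and t: "t0 \<le> t"
    and \<beta>: "continuous_on {0..} \<beta>" "\<And>a. a \<ge> 0 \<Longrightarrow> \<bar>\<beta> a\<bar> \<le> 1"
    and p: "p integrable_on {0..}" "\<And>a. a \<ge> 0 \<Longrightarrow> p a \<ge> 0" "integral {0..} p = 1"
  shows "\<bar>Lambda_fn t0 \<nu> D I0 \<beta> p \<kappa> t\<bar> \<le> I0"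
proof -
  have pa: "p absolutely_integrable_on {0..}"
    using p by (intro nonnegative_absolutely_integrable_1) auto
  define J where "J = integral {0..} (\<lambda>b. \<beta> (b / \<kappa> + (t - t0)) * p b)"
  have "(\<lambda>b. \<beta> (b / \<kappa> + (t - t0)) * p b) integrable_on {0..}"
    using t by (intro set_lebesgue_integral_eq_integral(1) absolutely_integrable_rescaled_shift \<beta> pa \<kappa>) auto
  then have "norm J \<le> integral {0..} p"
    unfolding J_def by (rule integral_norm_bound_integral[OF _ p(1)])
      (use \<beta>(2) \<kappa> t p(2) in \<open>auto simp: abs_mult mult_left_le_one_le\<close>)
  then have "I0 * \<bar>J\<bar> \<le> I0"
    using I0_nonneg p(3) by (simp add: mult_left_le)
  moreover have "\<bar>Lambda_fn t0 \<nu> D I0 \<beta> p \<kappa> t - 0 * Gamma_fn \<nu> D \<beta> (t - t0)\<bar> \<le> \<bar>I0 * J - 0 * \<beta> (t - t0)\<bar>"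
    unfolding J_def by (intro abs_Lambda_fn_diff_le \<kappa> t \<beta> pa)
  ultimately show ?thesis
    using I0_nonneg by (simp add: abs_mult)
qed

lemma uniform_limit_Lambda_fn:
  fixes \<beta> p :: "real \<Rightarrow> real"
  assumes \<beta>: "continuous_on {0..} \<beta>" "\<And>a. a \<ge> 0 \<Longrightarrow> \<bar>\<beta> a\<bar> \<le> 1" "\<And>a. a \<ge> c \<Longrightarrow> \<beta> a = 0"
    and p: "p integrable_on {0..}" "\<And>a. a \<ge> 0 \<Longrightarrow> p a \<ge> 0" "integral {0..} p = 1"
  shows "uniform_limit {t0..} (Lambda_fn t0 \<nu> D I0 \<beta> p) (\<lambda>t. I0 * Gamma_fn \<nu> D \<beta> (t - t0)) at_top"
proof (rule uniform_limitI)
  fix e :: real assume "e > 0"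
  let ?J = "\<lambda>\<kappa> s. integral {0..} (\<lambda>b. \<beta> (b / \<kappa> + s) * p b)"
  have pa: "p absolutely_integrable_on {0..}"
    using p by (intro nonnegative_absolutely_integrable_1) auto
  have "uniform_limit {0..} ?J \<beta> at_top"
    using uniformly_continuous_on_if_eventually_zero[of \<beta> c] \<beta> p
    by (intro uniform_limit_rescaled_average) auto
  moreover have "e / (I0 + 1) > 0"
    using \<open>e > 0\<close> I0_nonneg by simp
  ultimately have "\<forall>\<^sub>F \<kappa> in at_top. \<forall>s\<in>{0..}. dist (?J \<kappa> s) (\<beta> s) < e / (I0 + 1)"
    by (rule uniform_limitD)
  with eventually_gt_at_top[of 0]
  show "\<forall>\<^sub>F \<kappa> in at_top. \<forall>t\<in>{t0..}.
      dist (Lambda_fn t0 \<nu> D I0 \<beta> p \<kappa> t) (I0 * Gamma_fn \<nu> D \<beta> (t - t0)) < e"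
  proof eventually_elim
    case (elim \<kappa>)
    have "\<bar>Lambda_fn t0 \<nu> D I0 \<beta> p \<kappa> t - I0 * Gamma_fn \<nu> D \<beta> (t - t0)\<bar> < e" if t: "t0 \<le> t" for t
    proof -
      have "\<bar>Lambda_fn t0 \<nu> D I0 \<beta> p \<kappa> t - I0 * Gamma_fn \<nu> D \<beta> (t - t0)\<bar>
          \<le> \<bar>I0 * ?J \<kappa> (t - t0) - I0 * \<beta> (t - t0)\<bar>"
        by (intro abs_Lambda_fn_diff_le elim(1) t \<beta>(1,2) pa)
      also have "\<dots> = I0 * \<bar>?J \<kappa> (t - t0) - \<beta> (t - t0)\<bar>"
        using I0_nonneg by (simp add: right_diff_distrib[symmetric] abs_mult)
      also have "\<dots> \<le> I0 * (e / (I0 + 1))"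
        using elim(2) t I0_nonneg by (intro mult_left_mono) (auto simp: dist_real_def less_imp_le)
      also have "\<dots> < e"
        using \<open>e > 0\<close> I0_nonneg by (simp add: field_simps)
      finally show ?thesis .
    qed
    then show ?case
      by (simp add: dist_real_def)
  qed
qed

end

section \<open>The renewal equation\<close>

lemma abs_mult_sum_diff_le:
  fixes a b l1 l2 c1 c2 :: real
  shows "\<bar>a * (l1 + c1) - b * (l2 + c2)\<bar> \<le> \<bar>a\<bar> * \<bar>l1 - l2\<bar> + \<bar>a\<bar> * \<bar>c1 - c2\<bar> + \<bar>a - b\<bar> * \<bar>l2 + c2\<bar>"
proof -
  have split: "a * (l1 + c1) - b * (l2 + c2) = a * (l1 - l2) + a * (c1 - c2) + (a - b) * (l2 + c2)"
    by (simp add: algebra_simps)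
  show ?thesis
    unfolding split abs_mult[symmetric]
    by (rule order_trans[OF abs_triangle_ineq add_right_mono[OF abs_triangle_ineq]])
qed

locale renewal_equation = sirs_parameters + volterra_kernel k for k +
  fixes \<tau> :: "real \<Rightarrow> real" and \<tau>max :: real
  assumes tau_bounded: "\<And>t. t \<ge> t0 \<Longrightarrow> \<bar>\<tau> t\<bar> \<le> \<tau>max"
begin

text \<open>The right-hand side of the equation for \<open>N\<^sub>\<kappa>\<close> when \<open>L = \<Lambda>\<^sub>\<kappa>\<close>, and of the limiting equation when
  \<open>L t = I0 \<Gamma>(t - t0)\<close>.\<close>

definition renewal_rhs :: "(real \<Rightarrow> real) \<Rightarrow> (real \<Rightarrow> real) \<Rightarrow> real \<Rightarrow> real" where
  "renewal_rhs L x t = \<tau> t * F x t * (L t + integral {0..t - t0} (\<lambda>a. k a * x (t - a)))"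

definition lipschitz_const :: "real \<Rightarrow> real \<Rightarrow> real" where
  "lipschitz_const T K = \<tau>max * (F_bound T K + (1 + \<delta> * \<nu>) * (I0 + K * (T - t0)))"

definition stability_const :: "real \<Rightarrow> real \<Rightarrow> real" where
  "stability_const T K = 2 * \<tau>max * F_bound T K * exp ((2 * lipschitz_const T K + 1) * (T - t0))"

lemma tau_max_nonneg: "\<tau>max \<ge> 0"
  using tau_bounded[of t0] by linarith

lemma lipschitz_const_nonneg: "t0 \<le> T \<Longrightarrow> K \<ge> 0 \<Longrightarrow> lipschitz_const T K \<ge> 0"
  unfolding lipschitz_const_def
  using tau_max_nonneg F_bound_nonneg delta_nonneg nu_nonneg I0_nonneg by simp

lemma stability_const_nonneg: "t0 \<le> T \<Longrightarrow> K \<ge> 0 \<Longrightarrow> stability_const T K \<ge> 0"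
  unfolding stability_const_def using tau_max_nonneg F_bound_nonneg by simp

lemma abs_convolution_le:
  assumes x: "continuous_on {t0..} x" "\<And>u. u \<in> {t0..T} \<Longrightarrow> \<bar>x u\<bar> \<le> K" and t: "t \<in> {t0..T}"
  shows "\<bar>integral {0..t - t0} (\<lambda>a. k a * x (t - a))\<bar> \<le> K * (T - t0)"
proof -
  have "K \<ge> 0"
    using x(2)[of t0] t by fastforce
  have "\<bar>integral {t0..t} (\<lambda>u. k (t - u) * x u)\<bar> \<le> K * (t - t0)"
    using x(2) t by (intro abs_volterra_le_const x(1)) auto
  also have "\<dots> \<le> K * (T - t0)"
    using \<open>K \<ge> 0\<close> t by (intro mult_left_mono) auto
  finally show ?thesis
    using volterra_reflect[OF x(1), of t] t by simp
qed

lemma abs_convolution_diff_le: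
  assumes x: "continuous_on {t0..} x" and y: "continuous_on {t0..} y" and t: "t0 \<le> t"
    and l: "l > 0" and W: "W \<ge> 0"
    and xy: "\<And>s. s \<in> {t0..t} \<Longrightarrow> \<bar>x s - y s\<bar> \<le> W * exp (l * (s - t0))"
  shows "\<bar>integral {0..t - t0} (\<lambda>a. k a * x (t - a)) - integral {0..t - t0} (\<lambda>a. k a * y (t - a))\<bar>
    \<le> W * exp (l * (t - t0)) / l"
  unfolding volterra_reflect[OF x t] volterra_reflect[OF y t] volterra_diff[OF x y]
  using xy t l W
  by (intro abs_volterra_le_exp_weight continuous_intros x y) auto

lemma renewal_rhs_diff_le:
  assumes x: "continuous_on {t0..} x" "\<And>s. s \<in> {t0..T} \<Longrightarrow> \<bar>x s\<bar> \<le> K"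
    and y: "continuous_on {t0..} y" "\<And>s. s \<in> {t0..T} \<Longrightarrow> \<bar>y s\<bar> \<le> K"
    and t: "t \<in> {t0..T}" and L2: "\<bar>L2 t\<bar> \<le> I0"
    and l: "l \<ge> 1" and W: "W \<ge> 0"
    and xy: "\<And>s. s \<in> {t0..t} \<Longrightarrow> \<bar>x s - y s\<bar> \<le> W * exp (l * (s - t0))"
  shows "\<bar>renewal_rhs L1 x t - renewal_rhs L2 y t\<bar>
    \<le> \<tau>max * F_bound T K * \<bar>L1 t - L2 t\<bar> + lipschitz_const T K * (W * exp (l * (t - t0)) / l)"
proof -
  define Q where "Q = W * exp (l * (t - t0)) / l"
  define Cx where "Cx = integral {0..t - t0} (\<lambda>a. k a * x (t - a))"
  define Cy where "Cy = integral {0..t - t0} (\<lambda>a. k a * y (t - a))"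
  have Fx: "\<bar>F x t\<bar> \<le> F_bound T K"
    using abs_F_le[OF x t] .
  have F_diff: "\<bar>F x t - F y t\<bar> \<le> (1 + \<delta> * \<nu>) * Q"
    using abs_F_diff_le[of x y t, OF x(1) y(1) _ l W xy] t unfolding Q_def by (simp add: mult.assoc)
  have C_diff: "\<bar>Cx - Cy\<bar> \<le> Q"
    using abs_convolution_diff_le[OF x(1) y(1) _ _ W xy] t l unfolding Q_def Cx_def Cy_def by simp
  have L2_Cy: "\<bar>L2 t + Cy\<bar> \<le> I0 + K * (T - t0)"
    using abs_convolution_le[OF y t] L2 unfolding Cy_def by linarith
  have "Q \<ge> 0" "F_bound T K \<ge> 0"
    using W l Fx unfolding Q_def by auto
  have "\<bar>F x t * (L1 t + Cx) - F y t * (L2 t + Cy)\<bar>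
      \<le> \<bar>F x t\<bar> * \<bar>L1 t - L2 t\<bar> + \<bar>F x t\<bar> * \<bar>Cx - Cy\<bar> + \<bar>F x t - F y t\<bar> * \<bar>L2 t + Cy\<bar>"
    by (rule abs_mult_sum_diff_le)
  also have "\<dots> \<le> F_bound T K * \<bar>L1 t - L2 t\<bar> + F_bound T K * Q + ((1 + \<delta> * \<nu>) * Q) * (I0 + K * (T - t0))"
    using Fx F_diff C_diff L2_Cy \<open>Q \<ge> 0\<close> \<open>F_bound T K \<ge> 0\<close>
    by (intro add_mono mult_mono) auto
  finally have "\<bar>\<tau> t\<bar> * \<bar>F x t * (L1 t + Cx) - F y t * (L2 t + Cy)\<bar>
      \<le> \<tau>max * (F_bound T K * \<bar>L1 t - L2 t\<bar> + F_bound T K * Q + ((1 + \<delta> * \<nu>) * Q) * (I0 + K * (T - t0)))"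
    using tau_bounded[of t] t by (intro mult_mono) auto
  moreover have "\<bar>renewal_rhs L1 x t - renewal_rhs L2 y t\<bar>
      = \<bar>\<tau> t\<bar> * \<bar>F x t * (L1 t + Cx) - F y t * (L2 t + Cy)\<bar>"
    unfolding renewal_rhs_def Cx_def Cy_def by (simp only: mult.assoc right_diff_distrib[symmetric] abs_mult)
  moreover have "\<tau>max * (F_bound T K * \<bar>L1 t - L2 t\<bar> + F_bound T K * Q + ((1 + \<delta> * \<nu>) * Q) * (I0 + K * (T - t0)))
      = \<tau>max * F_bound T K * \<bar>L1 t - L2 t\<bar> + lipschitz_const T K * Q"
    unfolding lipschitz_const_def by (simp add: algebra_simps)
  ultimately show ?thesis
    unfolding Q_def by linarith
qed

lemma renewal_solution_stability:
  assumes x: "continuous_on {t0..} x" "\<And>s. s \<in> {t0..T} \<Longrightarrow> \<bar>x s\<bar> \<le> K"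
      "\<And>s. s \<in> {t0..T} \<Longrightarrow> x s = renewal_rhs L1 x s"
    and y: "continuous_on {t0..} y" "\<And>s. s \<in> {t0..T} \<Longrightarrow> \<bar>y s\<bar> \<le> K"
      "\<And>s. s \<in> {t0..T} \<Longrightarrow> y s = renewal_rhs L2 y s"
    and L: "\<And>s. s \<in> {t0..T} \<Longrightarrow> \<bar>L2 s\<bar> \<le> I0" "\<And>s. s \<in> {t0..T} \<Longrightarrow> \<bar>L1 s - L2 s\<bar> \<le> \<epsilon>"
    and t: "t \<in> {t0..T}"
  shows "\<bar>x t - y t\<bar> \<le> stability_const T K * \<epsilon>"
proof -
  have "t0 \<le> T" "K \<ge> 0"
    using t x(2)[of t0] by auto
  have "\<bar>x t - y t\<bar> \<le> 2 * (\<tau>max * F_bound T K * \<epsilon>) * exp ((2 * lipschitz_const T K + 1) * (T - t0))"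
  proof (rule bielecki_bound[where z = "\<lambda>s. x s - y s"])
    fix l W s
    assume l: "l \<ge> 1" and W: "W \<ge> 0" and s: "s \<in> {t0..T}"
      and xy: "\<And>r. r \<in> {t0..s} \<Longrightarrow> \<bar>x r - y r\<bar> \<le> W * exp (l * (r - t0))"
    have "\<bar>x s - y s\<bar> = \<bar>renewal_rhs L1 x s - renewal_rhs L2 y s\<bar>"
      using x(3) y(3) s by simp
    also have "\<dots> \<le> \<tau>max * F_bound T K * \<bar>L1 s - L2 s\<bar> + lipschitz_const T K * (W * exp (l * (s - t0)) / l)"
      by (rule renewal_rhs_diff_le[of x T K y s L2 l W L1, OF x(1,2) y(1,2) s L(1)[OF s] l W xy])
    also have "\<dots> \<le> \<tau>max * F_bound T K * \<epsilon> + lipschitz_const T K * (W * exp (l * (s - t0)) / l)"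
      using L(2)[OF s] tau_max_nonneg F_bound_nonneg[OF \<open>t0 \<le> T\<close> \<open>K \<ge> 0\<close>]
      by (intro add_right_mono mult_left_mono) auto
    finally show "\<bar>x s - y s\<bar> \<le> \<tau>max * F_bound T K * \<epsilon> + lipschitz_const T K * (W * exp (l * (s - t0)) / l)" .
  qed (use x(1) y(1) t lipschitz_const_nonneg[OF \<open>t0 \<le> T\<close> \<open>K \<ge> 0\<close>] in
      \<open>auto intro!: continuous_intros intro: continuous_on_subset\<close>)
  then show ?thesis
    unfolding stability_const_def by (simp add: mult_ac)
qed

lemma renewal_solution_unique:
  assumes x: "continuous_on {t0..} x" "\<And>s. s \<ge> t0 \<Longrightarrow> x s = renewal_rhs L x s"
    and y: "continuous_on {t0..} y" "\<And>s. s \<ge> t0 \<Longrightarrow> y s = renewal_rhs L y s"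
    and L: "\<And>s. s \<ge> t0 \<Longrightarrow> \<bar>L s\<bar> \<le> I0" and t: "t \<ge> t0"
  shows "x t = y t"
proof -
  have "continuous_on {t0..t} x" "continuous_on {t0..t} y"
    using x(1) y(1) by (auto intro: continuous_on_subset)
  then obtain Kx Ky where Kx: "\<And>s. s \<in> {t0..t} \<Longrightarrow> \<bar>x s\<bar> \<le> Kx"
    and Ky: "\<And>s. s \<in> {t0..t} \<Longrightarrow> \<bar>y s\<bar> \<le> Ky"
    using continuous_on_compact_bound[OF compact_Icc] by (metis real_norm_def)
  have "\<bar>x t - y t\<bar> \<le> stability_const t (max Kx Ky) * 0"
    using Kx Ky x(2) y(2) L t
    by (intro renewal_solution_stability[OF x(1) _ _ y(1)]) (auto intro: max.coboundedI1 max.coboundedI2)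
  then show ?thesis
    by simp
qed

lemma renewal_solutions_uniformly_Cauchy:
  fixes N L :: "real \<Rightarrow> real \<Rightarrow> real"
  assumes N: "\<And>\<kappa>. \<kappa> > 0 \<Longrightarrow> continuous_on {t0..} (N \<kappa>)"
      "\<And>\<kappa> s. \<kappa> > 0 \<Longrightarrow> s \<ge> t0 \<Longrightarrow> \<bar>N \<kappa> s\<bar> \<le> B"
      "\<And>\<kappa> s. \<kappa> > 0 \<Longrightarrow> s \<ge> t0 \<Longrightarrow> N \<kappa> s = renewal_rhs (L \<kappa>) (N \<kappa>) s"
    and L: "\<And>\<kappa> s. \<kappa> > 0 \<Longrightarrow> s \<ge> t0 \<Longrightarrow> \<bar>L \<kappa> s\<bar> \<le> I0" "uniform_limit {t0..} L Llim at_top"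
    and T: "t0 \<le> T" and e: "e > 0"
  shows "\<exists>K. \<forall>\<kappa>\<ge>K. \<forall>\<mu>\<ge>K. \<forall>t\<in>{t0..T}. \<bar>N \<kappa> t - N \<mu> t\<bar> \<le> e"
proof -
  define C where "C = stability_const T B"
  have "C \<ge> 0"
    using stability_const_nonneg[OF T] N(2)[of 1 t0] unfolding C_def by fastforce
  define \<eta> where "\<eta> = e / (C + 1)"
  have "\<eta> > 0"
    using e \<open>C \<ge> 0\<close> by (simp add: \<eta>_def)
  obtain K0 where K0: "\<And>\<kappa> s. \<kappa> \<ge> K0 \<Longrightarrow> s \<ge> t0 \<Longrightarrow> \<bar>L \<kappa> s - Llim s\<bar> < \<eta> / 2"
    using uniform_limitD[OF L(2), of "\<eta> / 2"] \<open>\<eta> > 0\<close>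
    unfolding eventually_at_top_linorder dist_real_def by auto
  show ?thesis
  proof (intro exI[of _ "max K0 1"] allI impI ballI)
    fix \<kappa> \<mu> t
    assume \<kappa>: "max K0 1 \<le> \<kappa>" and \<mu>: "max K0 1 \<le> \<mu>" and t: "t \<in> {t0..T}"
    have "\<bar>L \<kappa> s - L \<mu> s\<bar> \<le> \<eta>" if "s \<in> {t0..T}" for s
    proof -
      have "\<bar>L \<kappa> s - L \<mu> s\<bar> \<le> \<bar>L \<kappa> s - Llim s\<bar> + \<bar>L \<mu> s - Llim s\<bar>"
        using abs_triangle_ineq4[of "L \<kappa> s - Llim s" "L \<mu> s - Llim s"] by simp
      then show ?thesis
        using K0[of \<kappa> s] K0[of \<mu> s] \<kappa> \<mu> that by auto
    qed
    then have "\<bar>N \<kappa> t - N \<mu> t\<bar> \<le> C * \<eta>"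
      unfolding C_def using \<kappa> \<mu> t N L(1)
      by (intro renewal_solution_stability[of "N \<kappa>" T B "L \<kappa>" "N \<mu>" "L \<mu>"]) auto
    also have "\<dots> \<le> e"
      using e \<open>C \<ge> 0\<close> by (simp add: \<eta>_def field_simps)
    finally show "\<bar>N \<kappa> t - N \<mu> t\<bar> \<le> e" .
  qed
qed

lemma tendsto_renewal_rhs:
  fixes x L :: "'a \<Rightarrow> real \<Rightarrow> real"
  assumes x: "\<forall>\<^sub>F \<kappa> in G. continuous_on {t0..} (x \<kappa>) \<and> (\<forall>s\<in>{t0..t}. \<bar>x \<kappa> s\<bar> \<le> B)"
      "uniform_limit {t0..t} x y G"
    and y: "continuous_on {t0..} y" "\<And>s. s \<in> {t0..t} \<Longrightarrow> \<bar>y s\<bar> \<le> B"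
    and L: "((\<lambda>\<kappa>. L \<kappa> t) \<longlongrightarrow> Llim t) G" "\<bar>Llim t\<bar> \<le> I0"
    and t: "t0 \<le> t"
  shows "((\<lambda>\<kappa>. renewal_rhs (L \<kappa>) (x \<kappa>) t) \<longlongrightarrow> renewal_rhs Llim y t) G"
proof (rule tendstoI)
  fix e :: real assume "e > 0"
  have "\<bar>y t\<bar> \<le> B"
    using y(2) t by simp
  then have "B \<ge> 0"
    by linarith
  define C where "C = \<tau>max * F_bound t B"
  define A where "A = lipschitz_const t B * exp (t - t0)"
  have "C \<ge> 0" "A \<ge> 0"
    unfolding C_def A_def using tau_max_nonneg F_bound_nonneg lipschitz_const_nonneg t \<open>B \<ge> 0\<close> by auto
  define \<eta>1 where "\<eta>1 = e / (2 * (C + 1))"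
  define \<eta>2 where "\<eta>2 = e / (2 * (A + 1))"
  have "\<eta>1 > 0" "\<eta>2 > 0"
    using \<open>e > 0\<close> \<open>C \<ge> 0\<close> \<open>A \<ge> 0\<close> by (auto simp: \<eta>1_def \<eta>2_def)
  have "C * \<eta>1 < e / 2" "A * \<eta>2 < e / 2"
    using \<open>e > 0\<close> \<open>C \<ge> 0\<close> \<open>A \<ge> 0\<close> unfolding \<eta>1_def \<eta>2_def by (simp_all add: field_simps)
  then have "C * \<eta>1 + A * \<eta>2 < e"
    by linarith
  from tendstoD[OF L(1) \<open>\<eta>1 > 0\<close>] uniform_limitD[OF x(2) \<open>\<eta>2 > 0\<close>] x(1)
  show "\<forall>\<^sub>F \<kappa> in G. dist (renewal_rhs (L \<kappa>) (x \<kappa>) t) (renewal_rhs Llim y t) < e"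
  proof eventually_elim
    case (elim \<kappa>)
    have close: "\<bar>x \<kappa> s - y s\<bar> \<le> \<eta>2 * exp (1 * (s - t0))" if "s \<in> {t0..t}" for s
    proof -
      have "\<bar>x \<kappa> s - y s\<bar> \<le> \<eta>2"
        using bspec[OF elim(2) that] by (simp add: dist_real_def)
      also have "\<dots> \<le> \<eta>2 * exp (1 * (s - t0))"
        using \<open>\<eta>2 > 0\<close> that by (simp add: mult_le_cancel_left1)
      finally show ?thesis .
    qed
    have "\<bar>renewal_rhs (L \<kappa>) (x \<kappa>) t - renewal_rhs Llim y t\<bar>
        \<le> C * \<bar>L \<kappa> t - Llim t\<bar> + lipschitz_const t B * (\<eta>2 * exp (1 * (t - t0)) / 1)"
      unfolding C_def using elim(3) y L(2) t \<open>\<eta>2 > 0\<close> close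
      by (intro renewal_rhs_diff_le[of "x \<kappa>" t B y t Llim 1 \<eta>2 "L \<kappa>"]) auto
    also have "\<dots> \<le> C * \<eta>1 + A * \<eta>2"
      using elim(1) \<open>C \<ge> 0\<close> unfolding A_def dist_real_def
      by (simp add: mult_left_mono less_imp_le mult_ac)
    finally show ?case
      using \<open>C * \<eta>1 + A * \<eta>2 < e\<close> by (simp add: dist_real_def)
  qed
qed

lemma renewal_limit_solves:
  fixes N L :: "real \<Rightarrow> real \<Rightarrow> real"
  assumes N: "\<And>\<kappa>. \<kappa> > 0 \<Longrightarrow> continuous_on {t0..} (N \<kappa>)"
      "\<And>\<kappa> s. \<kappa> > 0 \<Longrightarrow> s \<ge> t0 \<Longrightarrow> \<bar>N \<kappa> s\<bar> \<le> B"
      "\<And>\<kappa> s. \<kappa> > 0 \<Longrightarrow> s \<ge> t0 \<Longrightarrow> N \<kappa> s = renewal_rhs (L \<kappa>) (N \<kappa>) s"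
    and L: "((\<lambda>\<kappa>. L \<kappa> t) \<longlongrightarrow> Llim t) at_top" "\<bar>Llim t\<bar> \<le> I0"
    and lim: "\<And>T. uniform_limit {t0..T} N Nlim at_top" "continuous_on {t0..} Nlim"
    and t: "t \<ge> t0"
  shows "Nlim t = renewal_rhs Llim Nlim t"
proof -
  have N_lim: "((\<lambda>\<kappa>. N \<kappa> s) \<longlongrightarrow> Nlim s) at_top" if "s \<ge> t0" for s
    using tendsto_uniform_limitI[OF lim(1)[of s]] that by simp
  have "\<bar>Nlim s\<bar> \<le> B" if "s \<ge> t0" for s
  proof (rule tendsto_upperbound)
    show "((\<lambda>\<kappa>. \<bar>N \<kappa> s\<bar>) \<longlongrightarrow> \<bar>Nlim s\<bar>) at_top"
      using N_lim[OF that] by (rule tendsto_rabs)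
    show "\<forall>\<^sub>F \<kappa> in at_top. \<bar>N \<kappa> s\<bar> \<le> B"
      using eventually_gt_at_top[of 0] by eventually_elim (use N(2) that in auto)
  qed simp
  moreover have "\<forall>\<^sub>F \<kappa> in at_top. continuous_on {t0..} (N \<kappa>) \<and> (\<forall>s\<in>{t0..t}. \<bar>N \<kappa> s\<bar> \<le> B)"
    using eventually_gt_at_top[of 0] by eventually_elim (use N(1,2) in auto)
  ultimately have "((\<lambda>\<kappa>. renewal_rhs (L \<kappa>) (N \<kappa>) t) \<longlongrightarrow> renewal_rhs Llim Nlim t) at_top"
    using lim L t by (intro tendsto_renewal_rhs) auto
  moreover have "\<forall>\<^sub>F \<kappa> in at_top. renewal_rhs (L \<kappa>) (N \<kappa>) t = N \<kappa> t"
    using eventually_gt_at_top[of 0] by eventually_elim (use N(3) t in auto)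
  ultimately have "((\<lambda>\<kappa>. N \<kappa> t) \<longlongrightarrow> renewal_rhs Llim Nlim t) at_top"
    by (rule Lim_transform_eventually)
  with N_lim[OF t] show ?thesis
    using tendsto_unique trivial_limit_at_top_linorder by blast
qed

lemma renewal_solutions_converge:
  fixes N L :: "real \<Rightarrow> real \<Rightarrow> real"
  assumes N: "\<And>\<kappa>. \<kappa> > 0 \<Longrightarrow> continuous_on {t0..} (N \<kappa>)"
      "\<And>\<kappa> t. \<kappa> > 0 \<Longrightarrow> t \<ge> t0 \<Longrightarrow> \<bar>N \<kappa> t\<bar> \<le> B"
      "\<And>\<kappa> t. \<kappa> > 0 \<Longrightarrow> t \<ge> t0 \<Longrightarrow> N \<kappa> t = renewal_rhs (L \<kappa>) (N \<kappa>) t"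
    and L: "\<And>\<kappa> t. \<kappa> > 0 \<Longrightarrow> t \<ge> t0 \<Longrightarrow> \<bar>L \<kappa> t\<bar> \<le> I0" "uniform_limit {t0..} L Llim at_top"
      "\<And>t. t \<ge> t0 \<Longrightarrow> \<bar>Llim t\<bar> \<le> I0"
  shows "\<exists>Nlim. (\<forall>t\<ge>t0. ((\<lambda>\<kappa>. N \<kappa> t) \<longlongrightarrow> Nlim t) at_top) \<and>
    (\<forall>a b. t0 \<le> a \<longrightarrow> uniform_limit {a..b} N Nlim at_top) \<and> continuous_on {t0..} Nlim \<and>
    (\<forall>t\<ge>t0. Nlim t = renewal_rhs Llim Nlim t) \<and>
    (\<forall>M. continuous_on {t0..} M \<and> (\<forall>t\<ge>t0. M t = renewal_rhs Llim M t) \<longrightarrow> (\<forall>t\<ge>t0. M t = Nlim t))"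
proof -
  obtain Nlim where lim: "\<And>T. uniform_limit {t0..T} N Nlim at_top" "continuous_on {t0..} Nlim"
    using uniform_limit_if_uniformly_Cauchy_on_Icc[OF renewal_solutions_uniformly_Cauchy[OF N L(1,2)] N(1)]
    by blast
  have solves: "Nlim t = renewal_rhs Llim Nlim t" if t: "t \<ge> t0" for t
    using tendsto_uniform_limitI[OF L(2), of t] t
    by (intro renewal_limit_solves[where L = L and Llim = Llim, OF N _ L(3)[OF t] lim t]) auto
  have "M t = Nlim t" if "continuous_on {t0..} M" "\<forall>s\<ge>t0. M s = renewal_rhs Llim M s" "t \<ge> t0" for M t
    by (rule renewal_solution_unique[where L = Llim, OF that(1) _ lim(2) solves L(3) that(3)])
      (use that(2) in auto)
  moreover have "((\<lambda>\<kappa>. N \<kappa> t) \<longlongrightarrow> Nlim t) at_top" if "t \<ge> t0" for t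
    using tendsto_uniform_limitI[OF lim(1)[of t]] that by simp
  moreover have "uniform_limit {a..b} N Nlim at_top" if "t0 \<le> a" for a b
    by (rule uniform_limit_on_subset[OF lim(1)[of b]]) (use that in auto)
  ultimately show ?thesis
    using lim(2) solves by blast
qed

end

theorem theorem3p2:
  fixes t0 \<nu> D \<delta> S0 R0 I0 \<tau>max aplus :: real
    and \<tau> \<beta> p :: "real \<Rightarrow> real"
    and N :: "real \<Rightarrow> real \<Rightarrow> real"
  assumes "\<nu> > 0" "D \<ge> 0" "\<delta> \<ge> 0" "S0 \<ge> 0" "R0 \<ge> 0" "I0 \<ge> 0"
    and tau_cont: "continuous_on {t0..} \<tau>"
    and tau_nonneg: "\<forall>t\<ge>t0. \<tau> t \<ge> 0"
    and tau_max: "\<tau>max > 0" "\<forall>t\<ge>t0. \<bar>\<tau> t\<bar> \<le> \<tau>max"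
    and beta_meas: "set_borel_measurable lborel {0..} \<beta>"
    and beta_cont: "continuous_on {0..} \<beta>"
    and beta_range: "\<forall>a\<ge>0. 0 \<le> \<beta> a \<and> \<beta> a \<le> 1"
    and aplus: "aplus > 0" "\<forall>a\<ge>aplus. \<beta> a = 0"
    and p_nonneg: "\<forall>a\<ge>0. p a \<ge> 0"
    and p_int: "p integrable_on {0..}" "integral {0..} p = 1"
    and N_sol: "\<forall>\<kappa>>0. continuous_on {t0..} (N \<kappa>) \<and>
        (\<forall>t\<ge>t0. \<bar>N \<kappa> t\<bar> \<le> 2 * \<tau>max * S0 * I0) \<and>
        (\<forall>t\<ge>t0. N \<kappa> t = \<tau> t * F_op t0 \<nu> D \<delta> S0 R0 I0 (N \<kappa>) t *
            (Lambda_fn t0 \<nu> D I0 \<beta> p \<kappa> t +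
             integral {0..t - t0} (\<lambda>a. \<beta> a * exp (-(\<nu> + D) * a) * N \<kappa> (t - a))))"
  shows "\<exists>Nlim :: real \<Rightarrow> real.
           (\<forall>t\<ge>t0. ((\<lambda>\<kappa>. N \<kappa> t) \<longlongrightarrow> Nlim t) at_top) \<and>
           (\<forall>a b. t0 \<le> a \<longrightarrow> uniform_limit {a..b} N Nlim at_top) \<and>
           continuous_on {t0..} Nlim \<and>
           (\<forall>t\<ge>t0. Nlim t = \<tau> t * F_op t0 \<nu> D \<delta> S0 R0 I0 Nlim t *
              (I0 * Gamma_fn \<nu> D \<beta> (t - t0) +
               integral {0..t - t0} (\<lambda>a. Gamma_fn \<nu> D \<beta> a * Nlim (t - a)))) \<and>
           (\<forall>M :: real \<Rightarrow> real. continuous_on {t0..} M \<and>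
              (\<forall>t\<ge>t0. M t = \<tau> t * F_op t0 \<nu> D \<delta> S0 R0 I0 M t *
                 (I0 * Gamma_fn \<nu> D \<beta> (t - t0) +
                  integral {0..t - t0} (\<lambda>a. Gamma_fn \<nu> D \<beta> a * M (t - a))))
              \<longrightarrow> (\<forall>t\<ge>t0. M t = Nlim t))"
proof -
  interpret sirs_parameters t0 \<nu> D \<delta> S0 R0 I0
    by unfold_locales (use assms(1-6) in auto)
  have \<beta>_bounded: "\<And>a. a \<ge> 0 \<Longrightarrow> \<bar>\<beta> a\<bar> \<le> 1"
    using beta_range by fastforce
  have \<Gamma>_bounded: "\<bar>Gamma_fn \<nu> D \<beta> a\<bar> \<le> 1" if "a \<ge> 0" for a
    using \<beta>_bounded that by (rule abs_Gamma_fn_le)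
  interpret renewal_equation t0 \<nu> D \<delta> S0 R0 I0 "Gamma_fn \<nu> D \<beta>" \<tau> \<tau>max
    using tau_max(2) continuous_on_Gamma_fn[OF beta_cont] \<Gamma>_bounded by unfold_locales auto
  let ?\<Lambda> = "Lambda_fn t0 \<nu> D I0 \<beta> p"
  have p: "\<And>a. a \<ge> 0 \<Longrightarrow> p a \<ge> 0"
    using p_nonneg by auto
  have \<Gamma>_eq: "\<beta> a * exp (-(\<nu> + D) * a) = Gamma_fn \<nu> D \<beta> a" for a
    by (simp add: Gamma_fn_def mult.commute)
  have "\<And>\<kappa>. \<kappa> > 0 \<Longrightarrow> continuous_on {t0..} (N \<kappa>)"
    "\<And>\<kappa> t. \<kappa> > 0 \<Longrightarrow> t \<ge> t0 \<Longrightarrow> \<bar>N \<kappa> t\<bar> \<le> 2 * \<tau>max * S0 * I0"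
    "\<And>\<kappa> t. \<kappa> > 0 \<Longrightarrow> t \<ge> t0 \<Longrightarrow> N \<kappa> t = renewal_rhs (?\<Lambda> \<kappa>) (N \<kappa>) t"
    using N_sol unfolding renewal_rhs_def \<Gamma>_eq by blast+
  moreover have "\<And>\<kappa> t. \<kappa> > 0 \<Longrightarrow> t \<ge> t0 \<Longrightarrow> \<bar>?\<Lambda> \<kappa> t\<bar> \<le> I0"
    "uniform_limit {t0..} ?\<Lambda> (\<lambda>t. I0 * Gamma_fn \<nu> D \<beta> (t - t0)) at_top"
    using abs_Lambda_fn_le[OF _ _ beta_cont \<beta>_bounded p_int(1) p p_int(2)]
      uniform_limit_Lambda_fn[OF beta_cont \<beta>_bounded aplus(2)[rule_format] p_int(1) p p_int(2)] by auto
  moreover have "\<bar>I0 * Gamma_fn \<nu> D \<beta> (t - t0)\<bar> \<le> I0" if "t \<ge> t0" for t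
    using \<Gamma>_bounded[of "t - t0"] that I0_nonneg by (simp add: abs_mult mult_left_le)
  ultimately show ?thesis
    using renewal_solutions_converge[where Llim = "\<lambda>t. I0 * Gamma_fn \<nu> D \<beta> (t - t0)"]
    unfolding renewal_rhs_def by blast
qed

end
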